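(* For every finite graph $G$: $G$ is a blue-red interval graph if and only if $G$ is a linear leaf power.
   Context: A leaf root of a graph $G$ is a pair $(T,\mathsf{w})$ where $T$ is a tree and $\mathsf{w}:E(T)\to[0,1]$ is a rational-valued edge-weight function, such that the vertices of $G$ are exactly the leaves of $T$ and for all distinct $u,v\in V(G)$, $uv\in E(G)$ iff $d_T(u,v)\le 1$, where $d_T(x,y)$ is the sum of the weights of the edges on the unique path of $T$ between $x$ and $y$. A caterpillar is a tree having a path that contains all nodes of degree at least $2$. A graph is a linear leaf power if it admits a leaf root $(T,\mathsf{w})$ with $T$ a caterpillar. A graph $G$ is a blue-red interval graph if there exist a bipartition $(B,R)$ of $V(G)$ and closed intervals $I_v\subseteq\mathbb{Q}$, $v\in V(G)$, such that $E(G)=\{b_1b_2 : b_1,b_2\in B,\ b_1\neq b_2,\ I_{b_1}\cap I_{b_2}\neq\emptyset\}\cup\{rb : r\in R,\ b\in B,\ I_r\subseteq I_b\}$ (in particular $R$ is an independent set). *)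

theory Defs
  imports Complex_Main
begin

definition simple_graph :: "'v set \<Rightarrow> 'v set set \<Rightarrow> bool" where
  "simple_graph V E \<longleftrightarrow>
     (\<forall>e\<in>E. \<exists>u v. u \<noteq> v \<and> u \<in> V \<and> v \<in> V \<and> e = {u, v})"

definition is_path :: "'v set \<Rightarrow> 'v set set \<Rightarrow> 'v list \<Rightarrow> bool" where
  "is_path N F xs \<longleftrightarrow> distinct xs \<and> set xs \<subseteq> N \<and>
     (\<forall>i. Suc i < length xs \<longrightarrow> {xs ! i, xs ! Suc i} \<in> F)"

definition connected_graph :: "'v set \<Rightarrow> 'v set set \<Rightarrow> bool" where
  "connected_graph N F \<longleftrightarrow>
     (\<forall>x\<in>N. \<forall>y\<in>N. \<exists>xs. is_path N F xs \<and> xs \<noteq> [] \<and> hd xs = x \<and> last xs = y)"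

definition acyclic_graph :: "'v set \<Rightarrow> 'v set set \<Rightarrow> bool" where
  "acyclic_graph N F \<longleftrightarrow>
     \<not> (\<exists>xs. 3 \<le> length xs \<and> is_path N F xs \<and> {last xs, hd xs} \<in> F)"

definition is_tree :: "'v set \<Rightarrow> 'v set set \<Rightarrow> bool" where
  "is_tree N F \<longleftrightarrow> finite N \<and> simple_graph N F \<and> connected_graph N F \<and> acyclic_graph N F"

definition degree :: "'v set set \<Rightarrow> 'v \<Rightarrow> nat" where
  "degree F x = card {e \<in> F. x \<in> e}"

text \<open>Leaves of a tree: nodes of degree at most 1 (degree 0 only occurs for the
one-node tree).\<close>
definition leaves :: "'v set \<Rightarrow> 'v set set \<Rightarrow> 'v set" where
  "leaves N F = {x \<in> N. degree F x \<le> 1}"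

definition caterpillar :: "'v set \<Rightarrow> 'v set set \<Rightarrow> bool" where
  "caterpillar N F \<longleftrightarrow> is_tree N F \<and>
     (\<exists>xs. is_path N F xs \<and> {x \<in> N. 2 \<le> degree F x} \<subseteq> set xs)"

definition path_weight :: "('v set \<Rightarrow> rat) \<Rightarrow> 'v list \<Rightarrow> rat" where
  "path_weight w xs = (\<Sum>i<length xs - 1. w {xs ! i, xs ! Suc i})"

definition tree_dist :: "'v set \<Rightarrow> 'v set set \<Rightarrow> ('v set \<Rightarrow> rat) \<Rightarrow> 'v \<Rightarrow> 'v \<Rightarrow> rat" where
  "tree_dist N F w x y =
     path_weight w (THE xs. is_path N F xs \<and> xs \<noteq> [] \<and> hd xs = x \<and> last xs = y)"

text \<open>Tree nodes are of type 'a + nat: the leaves are exactly the copies Inl v of the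
vertices of G; since trees are finite, this loses no generality.\<close>
definition leaf_root ::
  "'a set \<Rightarrow> 'a set set \<Rightarrow> ('a + nat) set \<Rightarrow> ('a + nat) set set \<Rightarrow> (('a + nat) set \<Rightarrow> rat) \<Rightarrow> bool" where
  "leaf_root V E N F w \<longleftrightarrow> is_tree N F \<and> leaves N F = Inl ` V \<and>
     (\<forall>e\<in>F. 0 \<le> w e \<and> w e \<le> 1) \<and>
     (\<forall>u\<in>V. \<forall>v\<in>V. u \<noteq> v \<longrightarrow> ({u, v} \<in> E \<longleftrightarrow> tree_dist N F w (Inl u) (Inl v) \<le> 1))"

definition linear_leaf_power :: "'a set \<Rightarrow> 'a set set \<Rightarrow> bool" where
  "linear_leaf_power V E \<longleftrightarrow> (\<exists>N F w. leaf_root V E N F w \<and> caterpillar N F)"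

text \<open>Vertex v gets the closed (nonempty) rational interval [lo v, hi v]; B is the blue
class, V - B the red class.\<close>
definition blue_red_interval :: "'a set \<Rightarrow> 'a set set \<Rightarrow> bool" where
  "blue_red_interval V E \<longleftrightarrow>
     (\<exists>B (lo :: 'a \<Rightarrow> rat) hi. B \<subseteq> V \<and> (\<forall>v\<in>V. lo v \<le> hi v) \<and>
        E = {{b1, b2} | b1 b2. b1 \<in> B \<and> b2 \<in> B \<and> b1 \<noteq> b2 \<and>
                               {lo b1..hi b1} \<inter> {lo b2..hi b2} \<noteq> {}}
          \<union> {{r, b} | r b. r \<in> V - B \<and> b \<in> B \<and> {lo r..hi r} \<subseteq> {lo b..hi b}})"

end

theory Submission
  imports Defs
begin

text \<open>Both classes are the graphs with a linear model: rationals x v and l v such that distinct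
  vertices u, v are adjacent iff l u + l v + |x u - x v| \<le> 1.
  In a caterpillar leaf root every leaf hangs by a leg from a foot on the spine, and the
  distance of two leaves is the sum of their leg weights plus the spine distance of their
  feet; so x v is the spine position of the foot of v and l v its leg weight. Conversely,
  sorting the vertices by x and hanging each v by a leg of weight l v from its own spine node
  gives a caterpillar leaf root, once an affine rescaling has moved all weights into [0, 1].
  A linear model yields blue-red intervals: v gets the interval centred at x v with radius
  |l v - 1/2|, blue iff l v \<le> 1/2, and both intersection of blue intervals and containment of a
  red in a blue interval read |x u - x v| + (l u - 1/2) + (l v - 1/2) \<le> 0. Read backwards,
  this is exact except for red-red pairs meeting the bound, which a small perturbation of l
  removes.\<close>

section \<open>Graphs, paths and path weights\<close>

lemma is_path_Nil [simp]: "is_path N F []"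
  by (simp add: is_path_def)

lemma is_path_singleton [simp]: "is_path N F [x] \<longleftrightarrow> x \<in> N"
  by (simp add: is_path_def)

lemma is_path_Cons:
  "is_path N F (x # xs) \<longleftrightarrow>
     x \<notin> set xs \<and> x \<in> N \<and> (xs \<noteq> [] \<longrightarrow> {x, hd xs} \<in> F) \<and> is_path N F xs"
proof -
  have "(\<forall>i. Suc i < length (x # xs) \<longrightarrow> {(x # xs) ! i, (x # xs) ! Suc i} \<in> F) \<longleftrightarrow>
        (xs \<noteq> [] \<longrightarrow> {x, hd xs} \<in> F) \<and> (\<forall>i. Suc i < length xs \<longrightarrow> {xs ! i, xs ! Suc i} \<in> F)"
    by (auto simp: hd_conv_nth nth_Cons split: nat.splits)
  then show ?thesis
    by (auto simp: is_path_def)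
qed

lemma is_path_append:
  "is_path N F (xs @ ys) \<longleftrightarrow> is_path N F xs \<and> is_path N F ys \<and> set xs \<inter> set ys = {} \<and>
     (xs \<noteq> [] \<longrightarrow> ys \<noteq> [] \<longrightarrow> {last xs, hd ys} \<in> F)"
  by (induction xs) (auto simp: is_path_Cons)

lemma is_path_rev [simp]: "is_path N F (rev xs) \<longleftrightarrow> is_path N F xs"
  by (induction xs) (auto simp: is_path_append is_path_Cons last_rev insert_commute)

lemma is_path_take: "is_path N F xs \<Longrightarrow> is_path N F (take k xs)"
  and is_path_drop: "is_path N F xs \<Longrightarrow> is_path N F (drop k xs)"
  using is_path_append[of N F "take k xs" "drop k xs"] by simp_all

lemma path_weight_Nil [simp]: "path_weight w [] = 0"
  and path_weight_singleton [simp]: "path_weight w [x] = 0"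
  by (simp_all add: path_weight_def)

lemma path_weight_Cons_Cons [simp]:
  "path_weight w (x # y # zs) = w {x, y} + path_weight w (y # zs)"
  unfolding path_weight_def by (simp del: sum.lessThan_Suc add: sum.lessThan_Suc_shift)

lemma path_weight_append_overlap:
  "path_weight w (xs @ y # ys) = path_weight w (xs @ [y]) + path_weight w (y # ys)"
  by (induction xs rule: induct_list012) auto

lemma path_weight_rev [simp]: "path_weight w (rev xs) = path_weight w xs"
proof (induction xs rule: induct_list012)
  case (3 x y zs)
  have "path_weight w (rev (x # y # zs)) = path_weight w (rev (y # zs) @ [x])"
    by simp
  also have "\<dots> = path_weight w (rev zs @ [y]) + w {y, x}"
    using path_weight_append_overlap[of w "rev zs" y "[x]"] by simp
  also have "\<dots> = path_weight w (x # y # zs)"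
    using "3.IH"(2) by (simp add: insert_commute)
  finally show ?case .
qed simp_all

lemma path_weight_nonneg:
  "is_path N F xs \<Longrightarrow> \<forall>e\<in>F. 0 \<le> w e \<Longrightarrow> 0 \<le> path_weight w xs"
  by (induction xs rule: induct_list012) (auto simp: is_path_Cons)

lemma two_le_degree:
  assumes "finite F" "{z, y1} \<in> F" "{z, y2} \<in> F" "y1 \<noteq> y2"
  shows "2 \<le> degree F z"
proof -
  have "card {{z, y1}, {z, y2}} = 2"
    using assms(4) by (simp add: doubleton_eq_iff)
  moreover have "{{z, y1}, {z, y2}} \<subseteq> {e\<in>F. z \<in> e}" using assms by auto
  moreover have "finite {e\<in>F. z \<in> e}" using assms(1) by simp
  ultimately show ?thesis
    unfolding degree_def by (metis card_mono)
qed

lemma simple_graph_finite_edges: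
  assumes "simple_graph N F" "finite N"
  shows "finite F"
proof -
  have "F \<subseteq> Pow N" using assms(1) by (auto simp: simple_graph_def)
  then show ?thesis using assms(2) by (meson finite_Pow_iff rev_finite_subset)
qed

lemma simple_graph_eq_iff:
  assumes "simple_graph V E" "simple_graph V E'"
  shows "E = E' \<longleftrightarrow> (\<forall>u\<in>V. \<forall>v\<in>V. u \<noteq> v \<longrightarrow> ({u, v} \<in> E \<longleftrightarrow> {u, v} \<in> E'))"
proof
  assume pairs: "\<forall>u\<in>V. \<forall>v\<in>V. u \<noteq> v \<longrightarrow> ({u, v} \<in> E \<longleftrightarrow> {u, v} \<in> E')"
  show "E = E'"
  proof (intro equalityI subsetI)
    fix e assume "e \<in> E"
    then obtain u v where "u \<in> V" "v \<in> V" "u \<noteq> v" "e = {u, v}"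
      using assms(1) unfolding simple_graph_def by blast
    then show "e \<in> E'" using pairs \<open>e \<in> E\<close> by blast
  next
    fix e assume "e \<in> E'"
    then obtain u v where "u \<in> V" "v \<in> V" "u \<noteq> v" "e = {u, v}"
      using assms(2) unfolding simple_graph_def by blast
    then show "e \<in> E" using pairs \<open>e \<in> E'\<close> by blast
  qed
qed simp

section \<open>Paths in acyclic graphs\<close>

definition is_cycle :: "'v set \<Rightarrow> 'v set set \<Rightarrow> 'v list \<Rightarrow> bool" where
  "is_cycle N F xs \<longleftrightarrow> 3 \<le> length xs \<and> is_path N F xs \<and> {last xs, hd xs} \<in> F"

lemma acyclic_graph_iff_no_cycle: "acyclic_graph N F \<longleftrightarrow> (\<nexists>xs. is_cycle N F xs)"
  by (simp add: acyclic_graph_def is_cycle_def)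

lemma is_cycle_rotate1: "is_cycle N F xs \<Longrightarrow> is_cycle N F (rotate1 xs)"
  by (cases xs) (auto simp: is_cycle_def is_path_append is_path_Cons hd_append insert_commute)

lemma is_cycle_rotate: "is_cycle N F xs \<Longrightarrow> is_cycle N F (rotate k xs)"
  by (induction k) (auto intro: is_cycle_rotate1)

lemma diverging_paths_not_acyclic:
  assumes pa: "is_path N F (a # X)" and pb: "is_path N F (a # Y)"
    and ne: "X \<noteq> []" "Y \<noteq> []" and hd: "hd X \<noteq> hd Y" and lst: "last X = last Y"
  shows "\<not> acyclic_graph N F"
proof -
  have "\<exists>x\<in>set X. x \<in> set Y" using lst ne by (metis last_in_set)
  then obtain X1 c X2 where X: "X = X1 @ c # X2" and cY: "c \<in> set Y"
    and X1: "\<forall>y\<in>set X1. y \<notin> set Y"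
    by (rule split_list_first_propE)
  obtain Y1 Y2 where Y: "Y = Y1 @ c # Y2" using split_list[OF cY] by blast
  from pa have a1: "a \<notin> set X" "{a, hd X} \<in> F" "is_path N F X"
    using ne by (auto simp: is_path_Cons)
  from pb have a2: "a \<notin> set Y" "{a, hd Y} \<in> F" "is_path N F Y"
    using ne by (auto simp: is_path_Cons)
  have pX1: "is_path N F (a # X1 @ [c])"
    using pa unfolding X using is_path_append[of N F "a # X1 @ [c]" X2] by simp
  have pY1: "is_path N F (Y1 @ [c])"
    using a2(3) unfolding Y using is_path_append[of N F "Y1 @ [c]" Y2] by simp
  define C where "C = (a # X1 @ [c]) @ rev Y1"
  have "is_path N F C"
    unfolding C_def is_path_append
    using pX1 pY1 a2(1) X1 Y by (auto simp: is_path_append last_rev hd_rev insert_commute)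
  moreover have "3 \<le> length C"
    using hd X Y by (cases X1; cases Y1) (auto simp: C_def)
  moreover have "{last C, hd C} \<in> F"
    using a2(2) Y by (cases "Y1 = []") (auto simp: C_def last_rev insert_commute)
  ultimately show ?thesis
    unfolding acyclic_graph_iff_no_cycle is_cycle_def by blast
qed

lemma acyclic_path_unique:
  assumes "acyclic_graph N F"
  shows "is_path N F xs \<Longrightarrow> is_path N F ys \<Longrightarrow> xs \<noteq> [] \<Longrightarrow> ys \<noteq> [] \<Longrightarrow>
    hd xs = hd ys \<Longrightarrow> last xs = last ys \<Longrightarrow> xs = ys"
proof (induction xs arbitrary: ys)
  case (Cons a xs)
  then obtain ys' where ys: "ys = a # ys'" by (cases ys) auto
  consider "xs = []" "ys' = []" | "xs \<noteq> []" "ys' \<noteq> []"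
    using Cons.prems ys by (cases "xs = []"; cases "ys' = []") (auto simp: is_path_Cons dest: last_in_set)
  then show ?case
  proof cases
    case 2
    then have "hd xs = hd ys'"
      using diverging_paths_not_acyclic[of N F a xs ys'] Cons.prems ys assms by auto
    then show ?thesis
      using Cons.IH[of ys'] Cons.prems ys 2 by (auto simp: is_path_Cons)
  qed (use ys in simp)
qed simp

lemma tree_dist_path_weight:
  assumes "acyclic_graph N F" "is_path N F P" "P \<noteq> []"
  shows "tree_dist N F w (hd P) (last P) = path_weight w P"
proof -
  have "(THE xs. is_path N F xs \<and> xs \<noteq> [] \<and> hd xs = hd P \<and> last xs = last P) = P"
    using assms acyclic_path_unique[OF assms(1)] by (intro the_equality) auto
  then show ?thesis by (simp add: tree_dist_def)
qed

text \<open>A cycle has a vertex of maximal height, and its two cycle neighbours are distinct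
  neighbours of no greater height.\<close>

lemma acyclic_graph_by_height:
  fixes h :: "'v \<Rightarrow> 'h::linorder"
  assumes lower_unique:
    "\<And>z y1 y2. {z, y1} \<in> F \<Longrightarrow> {z, y2} \<in> F \<Longrightarrow> h y1 \<le> h z \<Longrightarrow> h y2 \<le> h z \<Longrightarrow> y1 = y2"
  shows "acyclic_graph N F"
proof (rule ccontr)
  assume "\<not> acyclic_graph N F"
  then obtain xs where cyc: "is_cycle N F xs"
    unfolding acyclic_graph_iff_no_cycle by blast
  then have "xs \<noteq> []" by (auto simp: is_cycle_def)
  then have "Max (h ` set xs) \<in> h ` set xs" by (intro Max_in) auto
  then obtain m where m: "m \<in> set xs" "h m = Max (h ` set xs)" by (metis imageE)
  have max: "h y \<le> h m" if "y \<in> set xs" for y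
    unfolding m(2) using that by (intro Max_ge) auto
  from m(1) obtain t where t: "t < length xs" "xs ! t = m" by (auto simp: in_set_conv_nth)
  define ys where "ys = rotate t xs"
  have cy: "is_cycle N F ys" unfolding ys_def by (rule is_cycle_rotate[OF cyc])
  have "ys \<noteq> []" using cy by (auto simp: is_cycle_def)
  then have "hd ys = m"
    using t by (simp add: ys_def hd_conv_nth nth_rotate)
  moreover have "3 \<le> length ys" using cy by (simp add: is_cycle_def)
  ultimately obtain a r where ys: "ys = m # a # r" "r \<noteq> []"
    by (auto simp: Suc_le_length_iff numeral_3_eq_3)
  have "{m, a} \<in> F" "{m, last r} \<in> F" "a \<noteq> last r"
    using cy ys by (auto simp: is_cycle_def is_path_Cons insert_commute)
  moreover have "h a \<le> h m" "h (last r) \<le> h m"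
    using max ys unfolding ys_def by (metis last_in_set list.set_intros set_rotate)+
  ultimately show False
    using lower_unique[of m a "last r"] by blast
qed

section \<open>Spines of caterpillars\<close>

definition spine_pos :: "('v set \<Rightarrow> rat) \<Rightarrow> 'v list \<Rightarrow> nat \<Rightarrow> rat" where
  "spine_pos w S i = path_weight w (take (Suc i) S)"

definition spine_foot :: "'v set set \<Rightarrow> 'v list \<Rightarrow> 'v \<Rightarrow> nat \<Rightarrow> bool" where
  "spine_foot F S p i \<longleftrightarrow> i < length S \<and> (if p \<in> set S then S ! i = p else {p, S ! i} \<in> F)"

definition leg_weight :: "('v set \<Rightarrow> rat) \<Rightarrow> 'v list \<Rightarrow> 'v \<Rightarrow> nat \<Rightarrow> rat" where
  "leg_weight w S p i = (if p \<in> set S then 0 else w {p, S ! i})"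

lemma path_weight_spine_segment:
  assumes "i \<le> j" "j < length S"
  shows "path_weight w (drop i (take (Suc j) S)) = spine_pos w S j - spine_pos w S i"
proof -
  define R where "R = drop (Suc i) (take (Suc j) S)"
  have seg: "drop i (take (Suc j) S) = S ! i # R"
    using assms Cons_nth_drop_Suc[of i "take (Suc j) S"] by (simp add: R_def)
  have "take (Suc j) S = take i S @ S ! i # R"
    using assms by (metis seg append_take_drop_id le_imp_less_Suc take_take min.absorb1 less_imp_le_nat)
  moreover have "take (Suc i) S = take i S @ [S ! i]"
    using assms by (simp add: take_Suc_conv_app_nth)
  ultimately show ?thesis
    unfolding spine_pos_def seg using path_weight_append_overlap[of w "take i S" "S ! i" R] by simp
qed

lemma spine_subpath:
  assumes S: "is_path N F S" and w: "\<forall>e\<in>F. 0 \<le> w e" and ij: "i < length S" "j < length S"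
  shows "\<exists>G. is_path N F G \<and> G \<noteq> [] \<and> hd G = S ! i \<and> last G = S ! j \<and> set G \<subseteq> set S \<and>
    path_weight w G = \<bar>spine_pos w S i - spine_pos w S j\<bar>"
proof -
  have ordered: "\<exists>G. is_path N F G \<and> G \<noteq> [] \<and> hd G = S ! i \<and> last G = S ! j \<and> set G \<subseteq> set S \<and>
      path_weight w G = spine_pos w S j - spine_pos w S i"
    if "i \<le> j" "j < length S" for i j
  proof (intro exI conjI)
    let ?G = "drop i (take (Suc j) S)"
    show "is_path N F ?G" using S by (intro is_path_drop is_path_take)
    show "?G \<noteq> []" "hd ?G = S ! i" using that by (simp_all add: hd_drop_conv_nth)
    show "last ?G = S ! j" using that by (simp add: last_conv_nth)
    show "set ?G \<subseteq> set S" by (meson in_set_dropD in_set_takeD subsetI)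
    show "path_weight w ?G = spine_pos w S j - spine_pos w S i"
      using that by (rule path_weight_spine_segment)
  qed
  have nonneg: "0 \<le> path_weight w G" if "is_path N F G" for G
    using that w by (rule path_weight_nonneg)
  show ?thesis
  proof (cases "i \<le> j")
    case True
    then show ?thesis using ordered[of i j] ij nonneg by fastforce
  next
    case False
    then obtain G where "is_path N F G" "G \<noteq> []" "hd G = S ! j" "last G = S ! i" "set G \<subseteq> set S"
      "path_weight w G = spine_pos w S i - spine_pos w S j"
      using ordered[of j i] ij by auto
    then show ?thesis
      using nonneg[of G] by (intro exI[of _ "rev G"]) (auto simp: hd_rev last_rev)
  qed
qed

lemma path_extend_to_foot:
  assumes G: "is_path N F G" "G \<noteq> []" "hd G = S ! i" and foot: "spine_foot F S p i"
    and p: "p \<in> N" "p \<notin> set S \<Longrightarrow> p \<notin> set G"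
  shows "\<exists>P. is_path N F P \<and> P \<noteq> [] \<and> hd P = p \<and> last P = last G \<and> set P \<subseteq> insert p (set G) \<and>
    path_weight w P = leg_weight w S p i + path_weight w G"
proof (cases "p \<in> set S")
  case True
  then show ?thesis
    using G foot by (intro exI[of _ G]) (auto simp: spine_foot_def leg_weight_def)
next
  case False
  then show ?thesis
    using G foot p
    by (intro exI[of _ "p # G"]) (auto simp: spine_foot_def leg_weight_def is_path_Cons neq_Nil_conv)
qed

lemma spine_path:
  assumes S: "is_path N F S" and w: "\<forall>e\<in>F. 0 \<le> w e" and pq: "p \<in> N" "q \<in> N" "p \<noteq> q"
    and feet: "spine_foot F S p i" "spine_foot F S q j"
  shows "\<exists>P. is_path N F P \<and> P \<noteq> [] \<and> hd P = p \<and> last P = q \<and>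
    path_weight w P = leg_weight w S p i + leg_weight w S q j + \<bar>spine_pos w S i - spine_pos w S j\<bar>"
proof -
  obtain G where G: "is_path N F G" "G \<noteq> []" "hd G = S ! i" "last G = S ! j" "set G \<subseteq> set S"
    "path_weight w G = \<bar>spine_pos w S i - spine_pos w S j\<bar>"
    using spine_subpath[OF S w, of i j] feet by (auto simp: spine_foot_def)
  have "p \<notin> set S \<Longrightarrow> p \<notin> set G" using G(5) by blast
  then obtain P where P: "is_path N F P" "P \<noteq> []" "hd P = p" "last P = S ! j"
    "set P \<subseteq> insert p (set G)" "path_weight w P = leg_weight w S p i + path_weight w G"
    using path_extend_to_foot[OF G(1-3) feet(1) pq(1), of w] G(4) by auto
  have "q \<notin> set S \<Longrightarrow> q \<notin> set (rev P)" using P(5) G(5) pq(3) by auto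
  then obtain Q where Q: "is_path N F Q" "Q \<noteq> []" "hd Q = q" "last Q = p"
    "path_weight w Q = leg_weight w S q j + path_weight w P"
    using path_extend_to_foot[of N F "rev P" S j q w] P(1-4) feet(2) pq(2)
    by (auto simp: hd_rev last_rev)
  show ?thesis
    using Q P(6) G(6) by (intro exI[of _ "rev Q"]) (auto simp: hd_rev last_rev)
qed

lemma tree_dist_spine:
  assumes "acyclic_graph N F" "is_path N F S" "\<forall>e\<in>F. 0 \<le> w e" "p \<in> N" "q \<in> N" "p \<noteq> q"
    "spine_foot F S p i" "spine_foot F S q j"
  shows "tree_dist N F w p q =
    leg_weight w S p i + leg_weight w S q j + \<bar>spine_pos w S i - spine_pos w S j\<bar>"
  using spine_path[OF assms(2-)] tree_dist_path_weight[OF assms(1)] by metis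

text \<open>Otherwise the second node on a path from z to the spine would have degree 2 without lying
  on the spine.\<close>

lemma caterpillar_adjacent_to_spine:
  assumes T: "is_tree N F" and S: "is_path N F S" "S \<noteq> []"
    and D: "{x\<in>N. 2 \<le> degree F x} \<subseteq> set S" and z: "z \<in> N" "z \<notin> set S"
  shows "\<exists>y\<in>set S. {z, y} \<in> F"
proof -
  have fin: "finite F"
    using T simple_graph_finite_edges by (auto simp: is_tree_def)
  have "hd S \<in> N" using S by (auto simp: is_path_def)
  then obtain P where P: "is_path N F P" "P \<noteq> []" "hd P = z" "last P = hd S"
    using T z unfolding is_tree_def connected_graph_def by blast
  have "\<exists>x\<in>set P. x \<in> set S" using P S by (metis last_in_set list.set_sel(1))
  then obtain P1 c P2 where P': "P = P1 @ c # P2" and cS: "c \<in> set S"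
    and P1: "\<forall>y\<in>set P1. y \<notin> set S"
    by (rule split_list_first_propE)
  obtain Q where Q: "P1 = z # Q"
    using P P' z cS by (cases P1) auto
  show ?thesis
  proof (cases Q)
    case Nil
    then have "{z, c} \<in> F" using P(1) P' Q by (simp add: is_path_Cons)
    then show ?thesis using cS by blast
  next
    case (Cons u Q')
    have "is_path N F (z # u # (Q' @ c # P2))" using P(1) P' Q Cons by simp
    then have "{z, u} \<in> F" "{u, hd (Q' @ c # P2)} \<in> F" "u \<in> N" "z \<noteq> hd (Q' @ c # P2)"
      by (auto simp: is_path_Cons hd_append split: if_splits)
    then have "u \<in> set S"
      using D two_le_degree[OF fin, of u z "hd (Q' @ c # P2)"] by (auto simp: insert_commute)
    moreover have "u \<notin> set S" using P1 Q Cons by auto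
    ultimately show ?thesis by simp
  qed
qed

lemma caterpillar_spine_foot:
  assumes "is_tree N F" "is_path N F S" "S \<noteq> []" "{x\<in>N. 2 \<le> degree F x} \<subseteq> set S" "p \<in> N"
  shows "\<exists>i. spine_foot F S p i"
proof (cases "p \<in> set S")
  case True
  then show ?thesis by (auto simp: spine_foot_def in_set_conv_nth)
next
  case False
  then obtain y where "y \<in> set S" "{p, y} \<in> F"
    using caterpillar_adjacent_to_spine[OF assms] by blast
  then show ?thesis using False by (auto simp: spine_foot_def in_set_conv_nth)
qed

section \<open>Linear models\<close>

definition linear_model :: "'a set \<Rightarrow> 'a set set \<Rightarrow> ('a \<Rightarrow> rat) \<Rightarrow> ('a \<Rightarrow> rat) \<Rightarrow> bool" where
  "linear_model V E x l \<longleftrightarrow>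
     (\<forall>u\<in>V. \<forall>v\<in>V. u \<noteq> v \<longrightarrow> ({u, v} \<in> E \<longleftrightarrow> l u + l v + \<bar>x u - x v\<bar> \<le> 1))"

lemma linear_leaf_power_imp_linear_model:
  assumes "linear_leaf_power V E"
  shows "\<exists>x l. linear_model V E x l"
proof -
  obtain N F w where LR: "leaf_root V E N F w" and cat: "caterpillar N F"
    using assms unfolding linear_leaf_power_def by blast
  have T: "is_tree N F" and leaves: "leaves N F = Inl ` V" and w: "\<forall>e\<in>F. 0 \<le> w e"
    and dist: "\<forall>u\<in>V. \<forall>v\<in>V. u \<noteq> v \<longrightarrow> ({u, v} \<in> E \<longleftrightarrow> tree_dist N F w (Inl u) (Inl v) \<le> 1)"
    using LR unfolding leaf_root_def by auto
  obtain S0 where S0: "is_path N F S0" "{x\<in>N. 2 \<le> degree F x} \<subseteq> set S0"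
    using cat unfolding caterpillar_def by blast
  have VN: "Inl v \<in> N" if "v \<in> V" for v
    using leaves that unfolding leaves_def by blast
  show ?thesis
  proof (cases "V = {}")
    case True
    then show ?thesis by (auto simp: linear_model_def)
  next
    case False
    then obtain v0 where "v0 \<in> V" by blast
    \<comment> \<open>The spine is empty only if no node has degree 2; then any single node serves.\<close>
    define S where "S = (if S0 = [] then [Inl v0] else S0)"
    have S: "is_path N F S" "S \<noteq> []" "{x\<in>N. 2 \<le> degree F x} \<subseteq> set S"
      using S0 VN[OF \<open>v0 \<in> V\<close>] by (auto simp: S_def)
    obtain ix where ix: "\<forall>p\<in>N. spine_foot F S (p :: 'a + nat) (ix p)"
      using caterpillar_spine_foot[OF T S] bchoice[of N "\<lambda>p i. spine_foot F S p i"] by blast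
    define x where "x v = spine_pos w S (ix (Inl v))" for v
    define l where "l v = leg_weight w S (Inl v) (ix (Inl v))" for v
    have "linear_model V E x l"
      unfolding linear_model_def
    proof (intro ballI impI)
      fix u v assume uv: "u \<in> V" "v \<in> V" "u \<noteq> v"
      have "tree_dist N F w (Inl u) (Inl v) = l u + l v + \<bar>x u - x v\<bar>"
        unfolding x_def l_def using T uv VN ix
        by (intro tree_dist_spine[OF _ S(1) w]) (auto simp: is_tree_def)
      then show "({u, v} \<in> E) = (l u + l v + \<bar>x u - x v\<bar> \<le> 1)" using dist uv by simp
    qed
    then show ?thesis by blast
  qed
qed

lemma linear_model_rescale:
  assumes t: "0 < t" and L: "linear_model V E x l"
  shows "linear_model V E (\<lambda>v. t * x v) (\<lambda>v. 1/2 + t * (l v - 1/2))"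
  unfolding linear_model_def
proof (intro ballI impI)
  fix u v assume uv: "u \<in> V" "v \<in> V" "u \<noteq> v"
  have "\<bar>t * x u - t * x v\<bar> = t * \<bar>x u - x v\<bar>"
    using t by (simp add: abs_mult flip: right_diff_distrib)
  then have "1/2 + t * (l u - 1/2) + (1/2 + t * (l v - 1/2)) + \<bar>t * x u - t * x v\<bar> \<le> 1 \<longleftrightarrow>
      t * (l u + l v + \<bar>x u - x v\<bar> - 1) \<le> 0"
    by (simp add: algebra_simps)
  also have "\<dots> \<longleftrightarrow> l u + l v + \<bar>x u - x v\<bar> \<le> 1"
    using t by (simp add: mult_le_0_iff)
  finally have "1/2 + t * (l u - 1/2) + (1/2 + t * (l v - 1/2)) + \<bar>t * x u - t * x v\<bar> \<le> 1 \<longleftrightarrow>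
      l u + l v + \<bar>x u - x v\<bar> \<le> 1" .
  then show "{u, v} \<in> E \<longleftrightarrow> 1/2 + t * (l u - 1/2) + (1/2 + t * (l v - 1/2)) + \<bar>t * x u - t * x v\<bar> \<le> 1"
    using L uv by (simp add: linear_model_def)
qed

lemma linear_model_normalize:
  assumes V: "finite V" and L: "linear_model V E x l"
  shows "\<exists>x l. linear_model V E x l \<and> (\<forall>v\<in>V. 0 \<le> l v \<and> l v \<le> 1) \<and>
    (\<forall>u\<in>V. \<forall>v\<in>V. \<bar>x u - x v\<bar> \<le> 1)"
proof -
  obtain M0 where M0: "\<forall>v\<in>V. \<bar>l v - 1/2\<bar> + \<bar>x v\<bar> \<le> M0"
    using bdd_above_finite[of "(\<lambda>v. \<bar>l v - 1/2\<bar> + \<bar>x v\<bar>) ` V"] V by (auto simp: bdd_above_def)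
  define M where "M = max 1 M0"
  have M: "\<bar>l v - 1/2\<bar> \<le> M" "\<bar>x v\<bar> \<le> M" if "v \<in> V" for v
    using M0 that abs_ge_zero[of "x v"] abs_ge_zero[of "l v - 1/2"] unfolding M_def by fastforce+
  define t where "t = 1 / (2 * M)"
  have t: "0 < t" "t * M = 1/2"
    by (simp_all add: t_def M_def)
  have l_bound: "\<bar>t * (l v - 1/2)\<bar> \<le> 1/2" if "v \<in> V" for v
  proof -
    have "\<bar>t * (l v - 1/2)\<bar> = t * \<bar>l v - 1/2\<bar>" using t(1) by (simp add: abs_mult)
    also have "\<dots> \<le> t * M" using M(1)[OF that] t(1) by simp
    finally show ?thesis using t(2) by simp
  qed
  have "0 \<le> 1/2 + t * (l v - 1/2) \<and> 1/2 + t * (l v - 1/2) \<le> 1" if "v \<in> V" for v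
    using l_bound[OF that] unfolding abs_le_iff by linarith
  moreover have "\<bar>t * x u - t * x v\<bar> \<le> 1" if "u \<in> V" "v \<in> V" for u v
  proof -
    have "\<bar>t * x u - t * x v\<bar> = t * \<bar>x u - x v\<bar>"
      using t(1) by (simp add: abs_mult flip: right_diff_distrib)
    also have "\<dots> \<le> t * (M + M)"
      using M(2)[OF that(1)] M(2)[OF that(2)] t(1) by (intro mult_left_mono) auto
    finally show ?thesis using t(2) by (simp add: distrib_left)
  qed
  ultimately show ?thesis
    using linear_model_rescale[OF t(1) L] by blast
qed

section \<open>Blue-red interval models\<close>

definition br_adjacent :: "'a set \<Rightarrow> ('a \<Rightarrow> rat) \<Rightarrow> ('a \<Rightarrow> rat) \<Rightarrow> 'a \<Rightarrow> 'a \<Rightarrow> bool" where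
  "br_adjacent B lo hi u v \<longleftrightarrow>
     (u \<in> B \<and> v \<in> B \<and> {lo u..hi u} \<inter> {lo v..hi v} \<noteq> {}) \<or>
     (u \<notin> B \<and> v \<in> B \<and> {lo u..hi u} \<subseteq> {lo v..hi v}) \<or>
     (u \<in> B \<and> v \<notin> B \<and> {lo v..hi v} \<subseteq> {lo u..hi u})"

lemma blue_red_interval_iff:
  assumes "simple_graph V E"
  shows "blue_red_interval V E \<longleftrightarrow>
    (\<exists>B lo hi. B \<subseteq> V \<and> (\<forall>v\<in>V. lo v \<le> hi v) \<and>
      (\<forall>u\<in>V. \<forall>v\<in>V. u \<noteq> v \<longrightarrow> ({u, v} \<in> E \<longleftrightarrow> br_adjacent B lo hi u v)))"
proof -
  let ?R = "\<lambda>B lo hi :: 'a \<Rightarrow> rat.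
    {{b1, b2} | b1 b2. b1 \<in> B \<and> b2 \<in> B \<and> b1 \<noteq> b2 \<and> {lo b1..hi b1} \<inter> {lo b2..hi b2} \<noteq> {}}
      \<union> {{r, b} | r b. r \<in> V - B \<and> b \<in> B \<and> {lo r..hi r} \<subseteq> {lo b..hi b}}"
  have "simple_graph V (?R B lo hi)" if "B \<subseteq> V" for B lo hi
    unfolding simple_graph_def
  proof
    fix e assume "e \<in> ?R B lo hi"
    then have "\<exists>u v. e = {u, v} \<and> u \<in> V \<and> v \<in> V \<and> u \<noteq> v" using that by auto
    then show "\<exists>u v. u \<noteq> v \<and> u \<in> V \<and> v \<in> V \<and> e = {u, v}" by blast
  qed
  moreover have "{u, v} \<in> ?R B lo hi \<longleftrightarrow> br_adjacent B lo hi u v"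
    if "u \<in> V" "v \<in> V" "u \<noteq> v" for B lo hi u v
    using that unfolding br_adjacent_def by (auto simp: doubleton_eq_iff Int_commute)
  ultimately have eq: "E = ?R B lo hi \<longleftrightarrow>
      (\<forall>u\<in>V. \<forall>v\<in>V. u \<noteq> v \<longrightarrow> ({u, v} \<in> E \<longleftrightarrow> br_adjacent B lo hi u v))"
    if "B \<subseteq> V" for B lo hi
    using simple_graph_eq_iff[OF assms] that by simp
  show ?thesis
    unfolding blue_red_interval_def
  proof (intro iffI; elim exE conjE)
    fix B lo hi assume B: "B \<subseteq> V" and lohi: "\<forall>v\<in>V. lo v \<le> hi v" and "E = ?R B lo hi"
    then have "\<forall>u\<in>V. \<forall>v\<in>V. u \<noteq> v \<longrightarrow> ({u, v} \<in> E \<longleftrightarrow> br_adjacent B lo hi u v)"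
      using eq[OF B, of lo hi] by simp
    with B lohi show "\<exists>B lo hi. B \<subseteq> V \<and> (\<forall>v\<in>V. lo v \<le> hi v) \<and>
      (\<forall>u\<in>V. \<forall>v\<in>V. u \<noteq> v \<longrightarrow> ({u, v} \<in> E \<longleftrightarrow> br_adjacent B lo hi u v))"
      by blast
  next
    fix B lo hi assume B: "B \<subseteq> V" and lohi: "\<forall>v\<in>V. lo v \<le> hi v"
      and "\<forall>u\<in>V. \<forall>v\<in>V. u \<noteq> v \<longrightarrow> ({u, v} \<in> E \<longleftrightarrow> br_adjacent B lo hi u v)"
    then have "E = ?R B lo hi"
      using eq[OF B, of lo hi] by simp
    with B lohi show "\<exists>B lo hi. B \<subseteq> V \<and> (\<forall>v\<in>V. lo v \<le> hi v) \<and> E = ?R B lo hi"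
      by blast
  qed
qed

text \<open>Blue intervals meet iff |c u - c v| \<le> r u + r v, and a red interval lies in a blue one iff
  |c u - c v| \<le> r v - r u: the two rules differ only in the sign of the radius.\<close>

lemma br_adjacent_signed_radius:
  fixes c s :: "'a \<Rightarrow> rat"
  assumes "\<And>w. w \<in> {u, v} \<Longrightarrow> (w \<in> B \<longrightarrow> s w \<le> 0) \<and> (w \<notin> B \<longrightarrow> 0 \<le> s w)"
  shows "br_adjacent B (\<lambda>w. c w - \<bar>s w\<bar>) (\<lambda>w. c w + \<bar>s w\<bar>) u v \<longleftrightarrow>
    (u \<in> B \<or> v \<in> B) \<and> \<bar>c u - c v\<bar> + s u + s v \<le> 0"
proof -
  have s: "\<bar>s w\<bar> = (if w \<in> B then - s w else s w)" "(w \<in> B \<longrightarrow> s w \<le> 0) \<and> (w \<notin> B \<longrightarrow> 0 \<le> s w)"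
    if "w \<in> {u, v}" for w
    using assms[OF that] by auto
  show ?thesis
    unfolding br_adjacent_def Int_atLeastAtMost atLeastatMost_empty_iff atLeastatMost_subset_iff
    using s[of u] s[of v] by (cases "u \<in> B"; cases "v \<in> B"; cases "c u \<le> c v") (auto simp: abs_if)
qed

lemma linear_model_imp_blue_red_interval:
  assumes G: "simple_graph V E" and L: "linear_model V E x l"
  shows "blue_red_interval V E"
proof -
  define B where "B = {v\<in>V. l v \<le> 1/2}"
  define s where "s v = l v - 1/2" for v
  define lo where "lo = (\<lambda>w. x w - \<bar>s w\<bar>)"
  define hi where "hi = (\<lambda>w. x w + \<bar>s w\<bar>)"
  have "\<forall>u\<in>V. \<forall>v\<in>V. u \<noteq> v \<longrightarrow> ({u, v} \<in> E \<longleftrightarrow> br_adjacent B lo hi u v)"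
  proof (intro ballI impI)
    fix u v assume uv: "u \<in> V" "v \<in> V" "u \<noteq> v"
    have "br_adjacent B lo hi u v \<longleftrightarrow> (u \<in> B \<or> v \<in> B) \<and> \<bar>x u - x v\<bar> + s u + s v \<le> 0"
      unfolding lo_def hi_def using uv by (intro br_adjacent_signed_radius) (auto simp: B_def s_def)
    also have "\<dots> \<longleftrightarrow> l u + l v + \<bar>x u - x v\<bar> \<le> 1"
      using uv by (auto simp: B_def s_def)
    also have "\<dots> \<longleftrightarrow> {u, v} \<in> E"
      using L uv by (simp add: linear_model_def)
    finally show "{u, v} \<in> E \<longleftrightarrow> br_adjacent B lo hi u v" by simp
  qed
  moreover have "B \<subseteq> V" "\<forall>v\<in>V. lo v \<le> hi v"
    by (auto simp: B_def lo_def hi_def)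
  ultimately show ?thesis
    unfolding blue_red_interval_iff[OF G] by blast
qed

lemma finite_positive_lower_bound:
  fixes K :: "'a::linordered_idom set"
  assumes "finite K"
  obtains \<delta> where "0 < \<delta>" "\<forall>k\<in>K. 0 < k \<longrightarrow> \<delta> \<le> k"
proof
  let ?P = "insert 1 {k\<in>K. 0 < k}"
  have "finite ?P" using assms by simp
  then show "0 < Min ?P" by (subst Min_gr_iff) auto
  show "\<forall>k\<in>K. 0 < k \<longrightarrow> Min ?P \<le> k"
    using \<open>finite ?P\<close> by (auto intro: Min_le)
qed

text \<open>With k u v = |c u - c v| + s u + s v, red-red pairs may have k u v = 0 without being
  adjacent. Lowering l by \<eta> on blue and raising it by \<eta> on red vertices, with 2 \<eta> below every
  positive value of k, rejects exactly these pairs.\<close>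

lemma blue_red_interval_imp_linear_model:
  assumes G: "simple_graph V E" and V: "finite V" and BR: "blue_red_interval V E"
  shows "\<exists>x l. linear_model V E x l"
proof -
  obtain B lo hi where lohi: "\<forall>v\<in>V. lo v \<le> hi v"
    and adj: "\<forall>u\<in>V. \<forall>v\<in>V. u \<noteq> v \<longrightarrow> ({u, v} \<in> E \<longleftrightarrow> br_adjacent B lo hi u v)"
    using BR unfolding blue_red_interval_iff[OF G] by blast
  define c where "c v = (lo v + hi v) / 2" for v
  define s where "s v = (if v \<in> B then - (hi v - lo v) / 2 else (hi v - lo v) / 2)" for v
  define k where "k u v = \<bar>c u - c v\<bar> + s u + s v" for u v
  have s_sign: "(v \<in> B \<longrightarrow> s v \<le> 0) \<and> (v \<notin> B \<longrightarrow> 0 \<le> s v)" if "v \<in> V" for v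
    using lohi that by (simp add: s_def)
  have adj_k: "{u, v} \<in> E \<longleftrightarrow> (u \<in> B \<or> v \<in> B) \<and> k u v \<le> 0"
    if uv: "u \<in> V" "v \<in> V" "u \<noteq> v" for u v
  proof -
    have "\<bar>s w\<bar> = (hi w - lo w) / 2" if "w \<in> V" for w
      using lohi that by (simp add: s_def)
    then have "lo w = c w - \<bar>s w\<bar>" "hi w = c w + \<bar>s w\<bar>" if "w \<in> V" for w
      using that by (simp_all add: c_def field_simps)
    then have "br_adjacent B lo hi u v = br_adjacent B (\<lambda>w. c w - \<bar>s w\<bar>) (\<lambda>w. c w + \<bar>s w\<bar>) u v"
      unfolding br_adjacent_def using uv by simp
    also have "\<dots> \<longleftrightarrow> (u \<in> B \<or> v \<in> B) \<and> k u v \<le> 0"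
      unfolding k_def using uv s_sign by (intro br_adjacent_signed_radius) auto
    finally show ?thesis using adj uv by simp
  qed
  obtain \<delta> where \<delta>: "0 < \<delta>" "\<forall>a\<in>(\<lambda>(u, v). k u v) ` (V \<times> V). 0 < a \<longrightarrow> \<delta> \<le> a"
    using finite_positive_lower_bound[of "(\<lambda>(u, v). k u v) ` (V \<times> V)"] V by blast
  define \<eta> where "\<eta> = \<delta> / 4"
  define l where "l v = 1/2 + s v + (if v \<in> B then - \<eta> else \<eta>)" for v
  have "linear_model V E c l"
    unfolding linear_model_def
  proof (intro ballI impI)
    fix u v assume uv: "u \<in> V" "v \<in> V" "u \<noteq> v"
    have "0 < k u v \<Longrightarrow> \<delta> \<le> k u v" using \<delta>(2) uv by blast
    moreover have "u \<notin> B \<Longrightarrow> v \<notin> B \<Longrightarrow> 0 \<le> k u v"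
      using s_sign uv by (simp add: k_def)
    ultimately show "{u, v} \<in> E \<longleftrightarrow> l u + l v + \<bar>c u - c v\<bar> \<le> 1"
      using adj_k[OF uv] \<delta>(1) unfolding l_def k_def \<eta>_def
      by (cases "u \<in> B"; cases "v \<in> B") auto
  qed
  then show ?thesis by blast
qed

section \<open>Caterpillar leaf roots from linear models\<close>

text \<open>For vs of length n the spine is Inr 0, ..., Inr (n - 1), and the leg of vs ! i joins it at
  Inr i. An edge containing Inl v weighs l v and the spine edge from Inr i to Inr (i + 1) weighs
  y (i + 1) - y i, so that Inr i sits at spine position y i - y 0.\<close>

definition cat_nodes :: "'a list \<Rightarrow> ('a + nat) set" where
  "cat_nodes vs = Inl ` set vs \<union> Inr ` {..<length vs}"

definition cat_edges :: "'a list \<Rightarrow> ('a + nat) set set" where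
  "cat_edges vs = (\<lambda>i. {Inl (vs ! i), Inr i}) ` {..<length vs} \<union>
     (\<lambda>i. {Inr i, Inr (Suc i)}) ` {i. Suc i < length vs}"

definition cat_spine :: "'a list \<Rightarrow> ('a + nat) list" where
  "cat_spine vs = map Inr [0..<length vs]"

definition cat_weight :: "('a \<Rightarrow> rat) \<Rightarrow> (nat \<Rightarrow> rat) \<Rightarrow> ('a + nat) set \<Rightarrow> rat" where
  "cat_weight l y e =
     (if Inl -` e = {} then y (Max (Inr -` e)) - y (Min (Inr -` e)) else l (the_elem (Inl -` e)))"

lemma cat_weight_leg [simp]: "cat_weight l y {Inl v, Inr i} = l v"
proof -
  have "Inl -` {Inl v, Inr i :: 'a + nat} = {v}" by auto
  then show ?thesis by (simp add: cat_weight_def)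
qed

lemma cat_weight_spine [simp]: "cat_weight l y {Inr i, Inr (Suc i)} = y (Suc i) - y i"
proof -
  have "Inl -` {Inr i, Inr (Suc i) :: 'a + nat} = {}"
    and "Inr -` {Inr i, Inr (Suc i) :: 'a + nat} = {i, Suc i}"
    by auto
  then show ?thesis by (simp add: cat_weight_def)
qed

lemma cat_edgesE:
  assumes "e \<in> cat_edges vs"
  obtains (leg) i where "i < length vs" "e = {Inl (vs ! i), Inr i}"
    | (spine) i where "Suc i < length vs" "e = {Inr i, Inr (Suc i)}"
  using assms unfolding cat_edges_def by blast

lemma cat_spine_path: "is_path (cat_nodes vs) (cat_edges vs) (cat_spine vs)"
  unfolding is_path_def cat_spine_def by (auto simp: distinct_map cat_nodes_def cat_edges_def)

lemma cat_spine_foot: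
  assumes "i < length vs"
  shows "spine_foot (cat_edges vs) (cat_spine vs) (Inl (vs ! i)) i"
    and "spine_foot (cat_edges vs) (cat_spine vs) (Inr i) i"
  using assms by (auto simp: spine_foot_def cat_spine_def cat_edges_def)

lemma cat_node_has_foot:
  assumes "p \<in> cat_nodes vs"
  shows "\<exists>i. spine_foot (cat_edges vs) (cat_spine vs) p i"
proof -
  consider i where "i < length vs" "p = Inl (vs ! i)" | i where "i < length vs" "p = Inr i"
    using assms by (auto simp: cat_nodes_def in_set_conv_nth)
  then show ?thesis
    by cases (use cat_spine_foot in blast)+
qed

text \<open>Height n for the legs and i for the i-th spine node: below every node there is at most
  one neighbour, the previous spine node or the foot of a leg.\<close>

lemma cat_acyclic:
  assumes "distinct vs"
  shows "acyclic_graph (cat_nodes vs) (cat_edges vs)"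
proof (rule acyclic_graph_by_height)
  let ?h = "\<lambda>p. case p of Inl _ \<Rightarrow> length vs | Inr i \<Rightarrow> i"
  have lower:
    "(\<exists>i. z = Inr (Suc i) \<and> y = Inr i) \<or> (\<exists>i. i < length vs \<and> z = Inl (vs ! i) \<and> y = Inr i)"
    if "{z, y} \<in> cat_edges vs" "?h y \<le> ?h z" for z y
    using that(1)
  proof (cases rule: cat_edgesE)
    case (leg i)
    then show ?thesis using that(2) by (auto simp: doubleton_eq_iff)
  next
    case (spine i)
    then show ?thesis using that(2) by (auto simp: doubleton_eq_iff)
  qed
  fix z y1 y2
  assume "{z, y1} \<in> cat_edges vs" "{z, y2} \<in> cat_edges vs" "?h y1 \<le> ?h z" "?h y2 \<le> ?h z"
  then show "y1 = y2"
    using lower[of z y1] lower[of z y2] assms by (auto simp: nth_eq_iff_index_eq)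
qed

lemma cat_is_tree:
  assumes "distinct vs"
  shows "is_tree (cat_nodes vs) (cat_edges vs)"
  unfolding is_tree_def
proof (intro conjI)
  show "finite (cat_nodes vs)" by (simp add: cat_nodes_def)
  show "simple_graph (cat_nodes vs) (cat_edges vs)"
    unfolding simple_graph_def
  proof
    fix e assume "e \<in> cat_edges vs"
    then show "\<exists>u v. u \<noteq> v \<and> u \<in> cat_nodes vs \<and> v \<in> cat_nodes vs \<and> e = {u, v}"
    proof (cases rule: cat_edgesE)
      case (leg i)
      show ?thesis
        by (rule exI[of _ "Inl (vs ! i)"], rule exI[of _ "Inr i"])
          (use leg in \<open>auto simp: cat_nodes_def\<close>)
    next
      case (spine i)
      show ?thesis
        by (rule exI[of _ "Inr i"], rule exI[of _ "Inr (Suc i)"])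
          (use spine in \<open>auto simp: cat_nodes_def\<close>)
    qed
  qed
  show "connected_graph (cat_nodes vs) (cat_edges vs)"
    unfolding connected_graph_def
  proof (intro ballI)
    fix p q assume pq: "p \<in> cat_nodes vs" "q \<in> cat_nodes vs"
    show "\<exists>xs. is_path (cat_nodes vs) (cat_edges vs) xs \<and> xs \<noteq> [] \<and> hd xs = p \<and> last xs = q"
    proof (cases "p = q")
      case True
      then show ?thesis using pq by (intro exI[of _ "[p]"]) simp
    next
      case False
      then show ?thesis
        using cat_node_has_foot[OF pq(1)] cat_node_has_foot[OF pq(2)] pq
          spine_path[OF cat_spine_path, where w = "\<lambda>_. 0"] by fastforce
    qed
  qed
  show "acyclic_graph (cat_nodes vs) (cat_edges vs)"
    using assms by (rule cat_acyclic)
qed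

lemma cat_degree_leg:
  assumes "distinct vs" "v \<in> set vs"
  shows "degree (cat_edges vs) (Inl v) \<le> 1"
proof -
  obtain i where i: "i < length vs" "vs ! i = v" using assms(2) by (auto simp: in_set_conv_nth)
  have "{e \<in> cat_edges vs. Inl v \<in> e} \<subseteq> {{Inl v, Inr i}}"
    using assms(1) i by (auto simp: cat_edges_def nth_eq_iff_index_eq)
  then have "card {e \<in> cat_edges vs. Inl v \<in> e} \<le> card {{Inl v, Inr i :: 'a + nat}}"
    by (intro card_mono) auto
  then show ?thesis by (simp add: degree_def)
qed

lemma cat_degree_spine:
  assumes "2 \<le> length vs" "i < length vs"
  shows "2 \<le> degree (cat_edges vs) (Inr i)"
proof -
  have "{i. Suc i < length vs} = {..<length vs - 1}" by auto
  then have fin: "finite (cat_edges vs)"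
    by (simp add: cat_edges_def)
  have leg: "{Inr i, Inl (vs ! i)} \<in> cat_edges vs"
    using assms by (auto simp: cat_edges_def insert_commute)
  show ?thesis
  proof (cases "Suc i < length vs")
    case True
    then have "{Inr i, Inr (Suc i)} \<in> cat_edges vs" by (auto simp: cat_edges_def)
    then show ?thesis using two_le_degree[OF fin leg] by blast
  next
    case False
    then obtain j where "i = Suc j" using assms by (cases i) auto
    then have "{Inr i, Inr j} \<in> cat_edges vs"
      using assms by (auto simp: cat_edges_def insert_commute)
    then show ?thesis using two_le_degree[OF fin leg] by blast
  qed
qed

lemma cat_leaves:
  assumes "distinct vs" "2 \<le> length vs"
  shows "leaves (cat_nodes vs) (cat_edges vs) = Inl ` set vs"
  using cat_degree_leg[OF assms(1)] cat_degree_spine[OF assms(2)]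
  by (fastforce simp: leaves_def cat_nodes_def)

lemma cat_caterpillar:
  assumes "distinct vs" "2 \<le> length vs"
  shows "caterpillar (cat_nodes vs) (cat_edges vs)"
  unfolding caterpillar_def
proof (intro conjI exI)
  show "is_tree (cat_nodes vs) (cat_edges vs)" using assms(1) by (rule cat_is_tree)
  show "is_path (cat_nodes vs) (cat_edges vs) (cat_spine vs)" by (rule cat_spine_path)
  show "{x \<in> cat_nodes vs. 2 \<le> degree (cat_edges vs) x} \<subseteq> set (cat_spine vs)"
    using cat_degree_leg[OF assms(1)] by (force simp: cat_nodes_def cat_spine_def)
qed

lemma cat_spine_pos:
  assumes "k < length vs"
  shows "spine_pos (cat_weight l y) (cat_spine vs) k = y k - y 0"
  using assms
proof (induction k)
  case 0
  then show ?case by (simp add: spine_pos_def cat_spine_def take_Suc_conv_app_nth)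
next
  case (Suc k)
  have "take (Suc (Suc k)) (cat_spine vs) = take k (cat_spine vs) @ [Inr k] @ [Inr (Suc k)]"
    using Suc.prems by (simp add: cat_spine_def take_Suc_conv_app_nth)
  then have "spine_pos (cat_weight l y) (cat_spine vs) (Suc k) =
      spine_pos (cat_weight l y) (cat_spine vs) k + (y (Suc k) - y k)"
    using Suc.prems
      path_weight_append_overlap[of "cat_weight l y" "take k (cat_spine vs)" "Inr k" "[Inr (Suc k)]"]
    by (simp add: spine_pos_def cat_spine_def take_Suc_conv_app_nth)
  then show ?case using Suc by simp
qed

lemma cat_tree_dist:
  assumes vs: "distinct vs" and ij: "i < length vs" "j < length vs" "i \<noteq> j"
    and l: "\<forall>v\<in>set vs. 0 \<le> l v" and y: "\<And>k. Suc k < length vs \<Longrightarrow> y k \<le> y (Suc k)"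
  shows "tree_dist (cat_nodes vs) (cat_edges vs) (cat_weight l y) (Inl (vs ! i)) (Inl (vs ! j)) =
    l (vs ! i) + l (vs ! j) + \<bar>y i - y j\<bar>"
proof -
  let ?w = "cat_weight l y" and ?S = "cat_spine vs"
  have w: "\<forall>e\<in>cat_edges vs. 0 \<le> ?w e"
    using l y by (auto simp: cat_edges_def)
  have leg: "Inl (vs ! k) \<in> cat_nodes vs" "Inl (vs ! k) \<notin> set ?S" if "k < length vs" for k
    using that by (auto simp: cat_nodes_def cat_spine_def)
  have "Inl (vs ! i) \<noteq> Inl (vs ! j)" using vs ij by (simp add: nth_eq_iff_index_eq)
  then have "tree_dist (cat_nodes vs) (cat_edges vs) ?w (Inl (vs ! i)) (Inl (vs ! j)) =
      leg_weight ?w ?S (Inl (vs ! i)) i + leg_weight ?w ?S (Inl (vs ! j)) j +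
      \<bar>spine_pos ?w ?S i - spine_pos ?w ?S j\<bar>"
    using leg ij cat_spine_foot(1)
    by (intro tree_dist_spine[OF cat_acyclic[OF vs] cat_spine_path w]) auto
  also have "\<dots> = l (vs ! i) + l (vs ! j) + \<bar>y i - y j\<bar>"
    using leg(2) ij by (simp add: leg_weight_def cat_spine_pos) (simp add: cat_spine_def)
  finally show ?thesis .
qed

text \<open>Over a single vertex the caterpillar above would make its one spine node a second leaf;
  here the tree consists of the leaves alone.\<close>

lemma linear_leaf_power_card_le_1:
  assumes "finite V" "card V \<le> 1"
  shows "linear_leaf_power V E"
proof -
  let ?N = "Inl ` V :: ('a + nat) set"
  have single: "u = v" if "u \<in> V" "v \<in> V" for u v
    using assms that card_le_Suc0_iff_eq by auto
  have "is_tree ?N {}"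
    unfolding is_tree_def
  proof (intro conjI)
    show "connected_graph ?N {}"
      unfolding connected_graph_def using single by (auto intro!: exI[of _ "[_]"])
    show "acyclic_graph ?N {}"
      by (rule acyclic_graph_by_height[where h = "\<lambda>_. 0 :: nat"]) simp
  qed (use assms in \<open>simp_all add: simple_graph_def\<close>)
  moreover have "leaves ?N {} = Inl ` V"
    by (simp add: leaves_def degree_def)
  ultimately have "leaf_root V E ?N {} (\<lambda>_. 0)" "caterpillar ?N {}"
    using single by (auto simp: leaf_root_def caterpillar_def degree_def intro: exI[of _ "[]"])
  then show ?thesis
    unfolding linear_leaf_power_def by blast
qed

lemma normalized_linear_model_imp_linear_leaf_power:
  assumes V: "finite V" "2 \<le> card V" and L: "linear_model V E x l"
    and l: "\<forall>v\<in>V. 0 \<le> l v \<and> l v \<le> 1" and x: "\<forall>u\<in>V. \<forall>v\<in>V. \<bar>x u - x v\<bar> \<le> 1"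
  shows "linear_leaf_power V E"
proof -
  obtain vs0 where "set vs0 = V" "distinct vs0" using finite_distinct_list[OF V(1)] by blast
  then obtain vs where vs: "set vs = V" "distinct vs" "sorted (map x vs)"
    by (metis distinct_sort set_sort sorted_sort_key)
  have n: "2 \<le> length vs" using V(2) vs by (metis distinct_card)
  have vsV: "vs ! i \<in> V" if "i < length vs" for i using vs(1) that by auto
  define y where "y i = x (vs ! i)" for i
  have y: "y k \<le> y (Suc k)" "y (Suc k) - y k \<le> 1" if "Suc k < length vs" for k
  proof -
    have "vs ! k \<in> V" "vs ! Suc k \<in> V" using vsV that by simp_all
    then have "\<bar>y (Suc k) - y k\<bar> \<le> 1" using x by (simp add: y_def)
    moreover show "y k \<le> y (Suc k)"
      using sorted_nth_mono[OF vs(3), of k "Suc k"] that by (simp add: y_def)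
    ultimately show "y (Suc k) - y k \<le> 1" by simp
  qed
  have "leaf_root V E (cat_nodes vs) (cat_edges vs) (cat_weight l y)"
    unfolding leaf_root_def
  proof (intro conjI ballI impI)
    show "is_tree (cat_nodes vs) (cat_edges vs)" using vs(2) by (rule cat_is_tree)
    show "leaves (cat_nodes vs) (cat_edges vs) = Inl ` V"
      using cat_leaves[OF vs(2) n] vs(1) by simp
    fix e assume "e \<in> cat_edges vs"
    then show "0 \<le> cat_weight l y e" "cat_weight l y e \<le> 1"
      by (cases rule: cat_edgesE; use l y vsV in auto)+
  next
    fix u v assume uv: "u \<in> V" "v \<in> V" "u \<noteq> v"
    then obtain i j where ij: "i < length vs" "j < length vs" "u = vs ! i" "v = vs ! j" "i \<noteq> j"
      using vs(1) by (metis in_set_conv_nth)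
    then have "tree_dist (cat_nodes vs) (cat_edges vs) (cat_weight l y) (Inl u) (Inl v) =
        l u + l v + \<bar>x u - x v\<bar>"
      using cat_tree_dist[OF vs(2) ij(1,2,5), of l y] l y(1) vs(1) by (simp add: y_def)
    then show "{u, v} \<in> E \<longleftrightarrow>
        tree_dist (cat_nodes vs) (cat_edges vs) (cat_weight l y) (Inl u) (Inl v) \<le> 1"
      using L uv by (simp add: linear_model_def)
  qed
  then show ?thesis
    using cat_caterpillar[OF vs(2) n] unfolding linear_leaf_power_def by blast
qed

theorem theorem1:
  fixes V :: "'a set" and E :: "'a set set"
  assumes "finite V" and "simple_graph V E"
  shows "blue_red_interval V E \<longleftrightarrow> linear_leaf_power V E"
proof
  assume "blue_red_interval V E"
  then obtain x0 l0 where "linear_model V E x0 l0"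
    using blue_red_interval_imp_linear_model assms by blast
  then obtain x l where model: "linear_model V E x l" "\<forall>v\<in>V. 0 \<le> l v \<and> l v \<le> 1"
      "\<forall>u\<in>V. \<forall>v\<in>V. \<bar>x u - x v\<bar> \<le> 1"
    using linear_model_normalize[OF assms(1)] by blast
  show "linear_leaf_power V E"
  proof (cases "card V \<le> 1")
    case False
    then have "2 \<le> card V" by simp
    then show ?thesis
      using normalized_linear_model_imp_linear_leaf_power[OF assms(1) _ model] by blast
  qed (rule linear_leaf_power_card_le_1[OF assms(1)])
next
  assume "linear_leaf_power V E"
  then obtain x l where "linear_model V E x l"
    using linear_leaf_power_imp_linear_model by blast
  then show "blue_red_interval V E"
    using linear_model_imp_blue_red_interval assms(2) by blast
qed

end
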